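(* Let $\mathcal{C}_1=\mathbb{C}\{e\}$ be the $2$-dimensional complex algebra with basis $1,e$ and $e^2=-1$. Let $A\in\mathcal{C}_1^{m\times n}$ be written as $A=A_0+A_1e$ with $A_0,A_1\in\mathbb{C}^{m\times n}$, and let $\overline{A}=A_0-A_1e$. For a positive integer $t$ define the $2t\times 2t$ matrices over $\mathcal{C}_1$ $$J_{2t}=\frac12\begin{pmatrix}(1-ie)I_t & -(i-e)I_t\\ -(i-e)I_t & (1-ie)I_t\end{pmatrix},\qquad J_{2t}'=\frac12\begin{pmatrix}(1-ie)I_t & (i-e)I_t\\ (i-e)I_t & (1-ie)I_t\end{pmatrix}.$$ Then $J_{2t}$ is invertible with $J_{2t}^{-1}=J_{2t}'$, and $$J_{2m}\begin{pmatrix}A&0\\0&\overline{A}\end{pmatrix}J_{2n}^{-1}=\begin{pmatrix}A_0+A_1i&0\\0&A_0-A_1i\end{pmatrix}.$$ In particular, if $m=n$ this is a similarity over $\mathcal{C}_1$.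
   Context: $i$ is the imaginary unit of $\mathbb{C}$, which commutes with $e$; $I_t$ is the $t\times t$ identity matrix. *)

theory Defs
  imports Complex_Main "Jordan_Normal_Form.Matrix"
begin

text \<open>The 2-dimensional complex algebra C_1 = C{e} with basis 1, e and e^2 = -1,
  where e commutes with the complex scalars. The element C1 a b stands for a + b e.\<close>

datatype c1 = C1 (c1_re: complex) (c1_e: complex)

instantiation c1 :: comm_ring_1
begin
definition "0 = C1 0 0"
definition "1 = C1 1 0"
definition "x + y = C1 (c1_re x + c1_re y) (c1_e x + c1_e y)"
definition "x - y = C1 (c1_re x - c1_re y) (c1_e x - c1_e y)"
definition "- x = C1 (- c1_re x) (- c1_e x)"
definition "x * y = C1 (c1_re x * c1_re y - c1_e x * c1_e y) (c1_re x * c1_e y + c1_e x * c1_re y)"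
instance
  by standard (auto simp: zero_c1_def one_c1_def plus_c1_def minus_c1_def uminus_c1_def
      times_c1_def algebra_simps intro: c1.expand)
end

definition c1_of :: "complex \<Rightarrow> c1" where "c1_of z = C1 z 0"
definition c1_unit_e :: c1 where "c1_unit_e = C1 0 1"
definition c1_i :: c1 where "c1_i = c1_of \<i>"

definition c1_conj :: "c1 \<Rightarrow> c1" where "c1_conj x = C1 (c1_re x) (- c1_e x)"

definition mat_A0 :: "c1 mat \<Rightarrow> complex mat" where "mat_A0 A = map_mat c1_re A"
definition mat_A1 :: "c1 mat \<Rightarrow> complex mat" where "mat_A1 A = map_mat c1_e A"
definition mat_conj :: "c1 mat \<Rightarrow> c1 mat" where "mat_conj A = map_mat c1_conj A"

definition J_mat :: "nat \<Rightarrow> c1 mat" where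
  "J_mat t = c1_of (1/2) \<cdot>\<^sub>m four_block_mat
     ((1 - c1_i * c1_unit_e) \<cdot>\<^sub>m 1\<^sub>m t) (- (c1_i - c1_unit_e) \<cdot>\<^sub>m 1\<^sub>m t)
     (- (c1_i - c1_unit_e) \<cdot>\<^sub>m 1\<^sub>m t) ((1 - c1_i * c1_unit_e) \<cdot>\<^sub>m 1\<^sub>m t)"

definition J'_mat :: "nat \<Rightarrow> c1 mat" where
  "J'_mat t = c1_of (1/2) \<cdot>\<^sub>m four_block_mat
     ((1 - c1_i * c1_unit_e) \<cdot>\<^sub>m 1\<^sub>m t) ((c1_i - c1_unit_e) \<cdot>\<^sub>m 1\<^sub>m t)
     ((c1_i - c1_unit_e) \<cdot>\<^sub>m 1\<^sub>m t) ((1 - c1_i * c1_unit_e) \<cdot>\<^sub>m 1\<^sub>m t)"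

end

theory Submission
  imports Defs
begin

(* J_{2t} and J'_{2t} are 2x2 block matrices with scalar blocks \<epsilon> I and \<mp>\<kappa> I, where
   \<epsilon> = (1 - i e)/2 and \<kappa> = (i - e)/2. In C_1, \<epsilon> is idempotent, \<kappa>^2 = \<epsilon> - 1 and \<epsilon> \<kappa> = 0.
   The first two facts give \<epsilon>^2 - \<kappa>^2 = 1, whence J J' = J' J = 1; the last one kills the
   off-diagonal blocks of J diag(A, conj A) J'. The diagonal entries become \<epsilon> x + (1 - \<epsilon>) conj x,
   and since e acts as i on \<epsilon> C_1 and as -i on (1 - \<epsilon>) C_1, this is a + i b for x = a + b e. *)

definition scalar_block_mat :: "'a::comm_ring_1 \<Rightarrow> 'a \<Rightarrow> nat \<Rightarrow> 'a mat" where
  "scalar_block_mat p q t =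
     four_block_mat (p \<cdot>\<^sub>m 1\<^sub>m t) (q \<cdot>\<^sub>m 1\<^sub>m t) (q \<cdot>\<^sub>m 1\<^sub>m t) (p \<cdot>\<^sub>m 1\<^sub>m t)"

lemma scalar_block_mat_carrier: "scalar_block_mat p q t \<in> carrier_mat (2 * t) (2 * t)"
  by (simp add: scalar_block_mat_def mult_2)

lemma dim_scalar_block_mat [simp]:
  "dim_row (scalar_block_mat p q t) = 2 * t" "dim_col (scalar_block_mat p q t) = 2 * t"
  using scalar_block_mat_carrier by (blast dest: carrier_matD)+

lemma smult_scalar_block_mat: "c \<cdot>\<^sub>m scalar_block_mat p q t = scalar_block_mat (c * p) (c * q) t"
  by (rule eq_matI) (auto simp: scalar_block_mat_def)

lemma scalar_block_mat_one: "scalar_block_mat 1 0 t = 1\<^sub>m (2 * t)"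
  by (rule eq_matI) (auto simp: scalar_block_mat_def)

lemma smult_one_mat_mult_left:
  "M \<in> carrier_mat m n \<Longrightarrow> (p \<cdot>\<^sub>m 1\<^sub>m m) * M = p \<cdot>\<^sub>m (M :: 'a::comm_ring_1 mat)"
  by (simp add: mult_smult_assoc_mat[of _ m m _ n])

lemma smult_one_mat_mult_right:
  "M \<in> carrier_mat m n \<Longrightarrow> M * (p \<cdot>\<^sub>m 1\<^sub>m n) = p \<cdot>\<^sub>m (M :: 'a::comm_ring_1 mat)"
  by (simp add: mult_smult_distrib[of _ m n _ n])

lemma scalar_block_mat_mult:
  "scalar_block_mat p q t * scalar_block_mat r s t
     = scalar_block_mat (p * r + q * s) (p * s + q * r) t"
  unfolding scalar_block_mat_def
  by (subst mult_four_block_mat[where ?nr1.0=t and ?n1.0=t and ?nr2.0=t and ?n2.0=t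
        and ?nc1.0=t and ?nc2.0=t])
     (auto simp: smult_one_mat_mult_left intro!: eq_matI)

lemma scalar_block_mat_mult_neg:
  assumes "p * p - q * q = 1"
  shows "scalar_block_mat p q t * scalar_block_mat p (- q) t = 1\<^sub>m (2 * t)"
  using assms by (simp add: scalar_block_mat_mult mult.commute scalar_block_mat_one)

lemma scalar_block_mat_mult_block_diag:
  assumes "A \<in> carrier_mat m n" and "B \<in> carrier_mat m n"
  shows "scalar_block_mat p q m * four_block_mat A (0\<^sub>m m n) (0\<^sub>m m n) B * scalar_block_mat r s n
    = four_block_mat ((p * r) \<cdot>\<^sub>m A + (q * s) \<cdot>\<^sub>m B) ((p * s) \<cdot>\<^sub>m A + (q * r) \<cdot>\<^sub>m B)
                     ((q * r) \<cdot>\<^sub>m A + (p * s) \<cdot>\<^sub>m B) ((q * s) \<cdot>\<^sub>m A + (p * r) \<cdot>\<^sub>m B)"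
proof -
  have "scalar_block_mat p q m * four_block_mat A (0\<^sub>m m n) (0\<^sub>m m n) B
      = four_block_mat (p \<cdot>\<^sub>m A) (q \<cdot>\<^sub>m B) (q \<cdot>\<^sub>m A) (p \<cdot>\<^sub>m B)"
    unfolding scalar_block_mat_def using assms
    by (subst mult_four_block_mat[where ?nr1.0=m and ?n1.0=m and ?nr2.0=m and ?n2.0=m
          and ?nc1.0=n and ?nc2.0=n])
       (auto simp: smult_one_mat_mult_left)
  then show ?thesis
    unfolding scalar_block_mat_def using assms
    by (simp, subst mult_four_block_mat[where ?nr1.0=m and ?n1.0=n and ?nr2.0=m and ?n2.0=n
          and ?nc1.0=n and ?nc2.0=n])
       (auto simp: smult_one_mat_mult_right intro!: eq_matI)
qed

definition J_diag_coeff :: c1 where "J_diag_coeff = c1_of (1/2) * (1 - c1_i * c1_unit_e)"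
definition J_off_coeff :: c1 where "J_off_coeff = c1_of (1/2) * (c1_i - c1_unit_e)"

lemma J_mat_eq_scalar_block_mat: "J_mat t = scalar_block_mat J_diag_coeff (- J_off_coeff) t"
  by (simp add: J_mat_def J_diag_coeff_def J_off_coeff_def smult_scalar_block_mat
      right_diff_distrib flip: scalar_block_mat_def)

lemma J'_mat_eq_scalar_block_mat: "J'_mat t = scalar_block_mat J_diag_coeff J_off_coeff t"
  by (simp add: J'_mat_def J_diag_coeff_def J_off_coeff_def smult_scalar_block_mat
      flip: scalar_block_mat_def)

lemmas c1_component_defs = zero_c1_def one_c1_def plus_c1_def minus_c1_def uminus_c1_def
  times_c1_def c1_of_def c1_unit_e_def c1_i_def c1_conj_def J_diag_coeff_def J_off_coeff_def

lemma J_diag_coeff_mult_off_coeff: "J_diag_coeff * J_off_coeff = 0"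
  by (simp add: c1_component_defs algebra_simps)

lemma J_coeff_sq_diff: "J_diag_coeff * J_diag_coeff - J_off_coeff * J_off_coeff = 1"
  by (simp add: c1_component_defs algebra_simps)

lemma J_conj_upper_entry:
  "J_diag_coeff * J_diag_coeff * x - J_off_coeff * J_off_coeff * c1_conj x
     = c1_of (c1_re x + \<i> * c1_e x)"
  by (cases x) (simp add: c1_component_defs algebra_simps)

lemma J_conj_lower_entry:
  "J_diag_coeff * J_diag_coeff * c1_conj x - J_off_coeff * J_off_coeff * x
     = c1_of (c1_re x - \<i> * c1_e x)"
  by (cases x) (simp add: c1_component_defs algebra_simps)

lemma J_mat_mult_J'_mat: "J_mat t * J'_mat t = 1\<^sub>m (2 * t)"
  using scalar_block_mat_mult_neg[of J_diag_coeff "- J_off_coeff"] J_coeff_sq_diff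
  by (simp add: J_mat_eq_scalar_block_mat J'_mat_eq_scalar_block_mat)

lemma J'_mat_mult_J_mat: "J'_mat t * J_mat t = 1\<^sub>m (2 * t)"
  using scalar_block_mat_mult_neg[of J_diag_coeff J_off_coeff] J_coeff_sq_diff
  by (simp add: J_mat_eq_scalar_block_mat J'_mat_eq_scalar_block_mat)

lemma invertible_J_mat: "invertible_mat (J_mat t)"
  unfolding invertible_mat_def inverts_mat_def
  using J_mat_mult_J'_mat J'_mat_mult_J_mat
  by (intro conjI exI[of _ "J'_mat t"])
     (auto simp: J_mat_eq_scalar_block_mat J'_mat_eq_scalar_block_mat)

lemma similar_mat_J_mat_conj:
  assumes "B \<in> carrier_mat (2 * t) (2 * t)"
  shows "similar_mat (J_mat t * B * J'_mat t) B"
  using assms scalar_block_mat_carrier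
  by (intro similar_matI[OF _ J_mat_mult_J'_mat J'_mat_mult_J_mat refl])
     (auto simp: J_mat_eq_scalar_block_mat J'_mat_eq_scalar_block_mat intro!: mult_carrier_mat)

lemma J_mat_conj_block_diag:
  assumes "A \<in> carrier_mat m n"
  shows "J_mat m * four_block_mat A (0\<^sub>m m n) (0\<^sub>m m n) (mat_conj A) * J'_mat n
    = four_block_mat (map_mat c1_of (mat_A0 A + \<i> \<cdot>\<^sub>m mat_A1 A)) (0\<^sub>m m n) (0\<^sub>m m n)
        (map_mat c1_of (mat_A0 A - \<i> \<cdot>\<^sub>m mat_A1 A))"
proof -
  have "mat_conj A \<in> carrier_mat m n" using assms by (simp add: mat_conj_def)
  then show ?thesis
    using assms
    unfolding J_mat_eq_scalar_block_mat J'_mat_eq_scalar_block_mat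
      scalar_block_mat_mult_block_diag[OF assms \<open>mat_conj A \<in> carrier_mat m n\<close>]
    by (intro cong_four_block_mat eq_matI)
       (auto simp: mat_conj_def mat_A0_def mat_A1_def J_conj_upper_entry J_conj_lower_entry
         J_diag_coeff_mult_off_coeff mult.commute[of J_off_coeff J_diag_coeff])
qed

theorem theorem6:
  fixes A :: "c1 mat" and m n :: nat
  assumes "m > 0" and "n > 0" and "A \<in> carrier_mat m n"
  shows "(\<forall>t>0. invertible_mat (J_mat t) \<and> J_mat t * J'_mat t = 1\<^sub>m (2 * t)
             \<and> J'_mat t * J_mat t = 1\<^sub>m (2 * t))
    \<and> J_mat m * four_block_mat A (0\<^sub>m m n) (0\<^sub>m m n) (mat_conj A) * J'_mat n
        = four_block_mat (map_mat c1_of (mat_A0 A + \<i> \<cdot>\<^sub>m mat_A1 A)) (0\<^sub>m m n) (0\<^sub>m m n)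
            (map_mat c1_of (mat_A0 A - \<i> \<cdot>\<^sub>m mat_A1 A))
    \<and> (m = n \<longrightarrow> similar_mat
          (four_block_mat (map_mat c1_of (mat_A0 A + \<i> \<cdot>\<^sub>m mat_A1 A)) (0\<^sub>m m n) (0\<^sub>m m n)
            (map_mat c1_of (mat_A0 A - \<i> \<cdot>\<^sub>m mat_A1 A)))
          (four_block_mat A (0\<^sub>m m n) (0\<^sub>m m n) (mat_conj A)))"
proof -
  define D where "D = four_block_mat A (0\<^sub>m m n) (0\<^sub>m m n) (mat_conj A)"
  have "D \<in> carrier_mat (2 * m) (2 * n)"
    using assms(3) by (simp add: D_def mat_conj_def mult_2)
  then have "m = n \<Longrightarrow> similar_mat (J_mat m * D * J'_mat n) D"
    by (auto intro: similar_mat_J_mat_conj)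
  then show ?thesis
    unfolding D_def J_mat_conj_block_diag[OF assms(3), symmetric]
    using invertible_J_mat J_mat_mult_J'_mat J'_mat_mult_J_mat by blast
qed

end
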